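(* Let $R$ be a $2$-dimensional simply connected cubiculated region. For any two distinct tilings $T_1,T_2$ of $R$, the binomial $B_{T_1,T_2}=y^{T_1}-y^{T_2}$ is generated by quadratics, i.e. lies in the ideal generated by the degree-$2$ binomials of $I_{G_R}$. In particular, $I_{R_{tiling}}\subseteq I_{R_{flip}}$.
   Context: A $2$-dimensional cubiculated region $R$ is a finite union of unit lattice squares in the plane (a homogeneous $2$-dimensional cubical complex); it is simply connected if every simple closed curve in it can be continuously shrunk to a point within it (i.e. it has no holes). A domino is two unit squares of $R$ sharing an edge; a tiling of $R$ is a set of dominoes covering every square exactly once; $\mathcal{T}_R$ is the set of tilings. $G_R$ is the graph with a vertex for each square and an edge between squares sharing an edge; tilings are perfect matchings of $G_R$. In $\mathbb{K}[y_e : e\in E(G_R)]$ write $y^{E_0}=\prod_{e\in E_0}y_e$. $I_{G_R}$ is the kernel of $\mathbb{K}[y_e]\to\mathbb{K}[x_v : v\in V(G_R)]$, $y_{\{i,j\}}\mapsto x_ix_j$; its nonzero degree-$2$ binomials are exactly $y^{D_1}-y^{D_2}$ for local flips $(D_1,D_2)$, where a local flip replaces two adjacent parallel dominoes forming a $2\times2$ square by the two perpendicular dominoes covering the same square (equivalently $D_1\cup D_2$ is a $4$-cycle of $G_R$). The flip ideal is $I_{R_{flip}}=\langle y^{D_1}-y^{D_2} : (D_1,D_2)\text{ a local flip}\rangle$ and the tiling ideal is $I_{R_{tiling}}=\langle y^{T_1}-y^{T_2} : T_1,T_2\in\mathcal{T}_R\rangle$. *)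

theory Defs
  imports "HOL-Analysis.Analysis" "HOL-Library.Poly_Mapping"
begin

text \<open>Unit lattice squares are indexed by their lower-left corner (i,j) :: int \<times> int.
  A 2-dimensional cubiculated region is a finite set R of such squares.\<close>

type_synonym cell = "int \<times> int"

definition unit_square :: "cell \<Rightarrow> (real \<times> real) set" where
  "unit_square c = cbox (real_of_int (fst c), real_of_int (snd c))
                        (real_of_int (fst c) + 1, real_of_int (snd c) + 1)"

definition region_space :: "cell set \<Rightarrow> (real \<times> real) set" where
  "region_space R = (\<Union>c\<in>R. unit_square c)"

text \<open>Simply connected (paper's notion, no connectedness required):
  every closed curve in the set can be contracted to a point within the set.\<close>

definition no_holes :: "(real \<times> real) set \<Rightarrow> bool" where
  "no_holes S \<longleftrightarrow> (\<forall>p. path p \<and> path_image p \<subseteq> S \<and> pathfinish p = pathstart p \<longrightarrow>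
       homotopic_loops S p (linepath (pathstart p) (pathstart p)))"

definition adjacent :: "cell \<Rightarrow> cell \<Rightarrow> bool" where
  "adjacent a b \<longleftrightarrow> \<bar>fst a - fst b\<bar> + \<bar>snd a - snd b\<bar> = 1"

text \<open>Dominoes of R = edges of the graph G_R (an edge is the 2-element set of its endpoints).\<close>

definition dominoes :: "cell set \<Rightarrow> cell set set" where
  "dominoes R = {{a, b} | a b. a \<in> R \<and> b \<in> R \<and> adjacent a b}"

definition tilings :: "cell set \<Rightarrow> cell set set set" where
  "tilings R = {T. T \<subseteq> dominoes R \<and> (\<forall>c\<in>R. \<exists>!d. d \<in> T \<and> c \<in> d)}"

text \<open>Polynomial ring K[y_e] with variables indexed by (potential) edges:
  polynomials are finitely supported maps from exponent vectors to coefficients.\<close>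

type_synonym 'k ypoly = "((cell set \<Rightarrow>\<^sub>0 nat) \<Rightarrow>\<^sub>0 'k)"

definition ymono :: "cell set set \<Rightarrow> 'k::comm_ring_1 ypoly" where
  "ymono E = Poly_Mapping.single (\<Sum>e\<in>E. Poly_Mapping.single e (1::nat)) 1"

definition gen_ideal :: "'a::comm_ring_1 set \<Rightarrow> 'a set" where
  "gen_ideal G = {p. \<exists>n (c :: nat \<Rightarrow> 'a) g. (\<forall>i<n. g i \<in> G) \<and> p = (\<Sum>i<n. c i * g i)}"

definition local_flips :: "cell set \<Rightarrow> (cell set set \<times> cell set set) set" where
  "local_flips R = {(D1, D2) | D1 D2 i j.
      {(i,j), (i+1,j), (i,j+1), (i+1,j+1)} \<subseteq> R \<and>
      ((D1 = {{(i,j),(i+1,j)}, {(i,j+1),(i+1,j+1)}} \<and> D2 = {{(i,j),(i,j+1)}, {(i+1,j),(i+1,j+1)}}) \<or>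
       (D2 = {{(i,j),(i+1,j)}, {(i,j+1),(i+1,j+1)}} \<and> D1 = {{(i,j),(i,j+1)}, {(i+1,j),(i+1,j+1)}}))}"

definition flip_ideal :: "cell set \<Rightarrow> 'k::comm_ring_1 ypoly set" where
  "flip_ideal R = gen_ideal {ymono D1 - ymono D2 | D1 D2. (D1, D2) \<in> local_flips R}"

definition tiling_ideal :: "cell set \<Rightarrow> 'k::comm_ring_1 ypoly set" where
  "tiling_ideal R = gen_ideal {ymono T1 - ymono T2 | T1 T2. T1 \<in> tilings R \<and> T2 \<in> tilings R}"

end

theory Submission
  imports Defs
begin

text \<open>
  Colour the cells like a chessboard. Thurston's flow of a tiling is divergence-free on R, and
  integrating it along lattice paths gives the height function of the tiling; outside R the flow
  is corrected by a flow avoiding R, which exists because R has no holes. The difference of the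
  heights of two tilings T and T' vanishes at every lattice point not surrounded by four cells
  of R. Where it is maximal and positive, and the height of T is maximal among such points, T has
  two parallel dominoes on the surrounding 2x2 block; flipping them lowers the difference by 4
  there and nowhere else. Hence any two tilings are connected by flips, and y^T - y^T' telescopes
  into monomial multiples of flip binomials.
\<close>

section \<open>Thurston's flow of a tiling\<close>

definition chess_sign :: "cell \<Rightarrow> int" where
  "chess_sign c = (if even (fst c + snd c) then 1 else -1)"

lemma adjacent_iff:
  "adjacent (x, y) q \<longleftrightarrow> q = (x + 1, y) \<or> q = (x - 1, y) \<or> q = (x, y + 1) \<or> q = (x, y - 1)"
  by (cases q) (auto simp: adjacent_def abs_if split: if_splits)

lemma adjacent_sym: "adjacent p q \<Longrightarrow> adjacent q p"
  by (auto simp: adjacent_def abs_minus_commute)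

lemma not_adjacent_self: "\<not> adjacent p p"
  by (simp add: adjacent_def)

lemma chess_sign_adjacent: "adjacent p q \<Longrightarrow> chess_sign q = - chess_sign p"
  by (cases p; cases q) (auto simp: adjacent_iff chess_sign_def)

lemma chess_sign_cases: "chess_sign p = 1 \<or> chess_sign p = -1"
  by (simp add: chess_sign_def)

definition skew :: "(cell \<Rightarrow> cell \<Rightarrow> int) \<Rightarrow> bool" where
  "skew f \<longleftrightarrow> (\<forall>p q. f q p = - f p q)"

definition divergence :: "(cell \<Rightarrow> cell \<Rightarrow> int) \<Rightarrow> cell \<Rightarrow> int" where
  "divergence f c =
     f c (fst c + 1, snd c) + f c (fst c - 1, snd c) + f c (fst c, snd c + 1) + f c (fst c, snd c - 1)"

text \<open>One unit leaves a cell of sign 1 through each side not covered by its domino and three units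
  enter through the covered side (the other way round for cells of sign -1), so every tiled cell
  is balanced.\<close>

definition thurston_flow :: "cell set set \<Rightarrow> cell \<Rightarrow> cell \<Rightarrow> int" where
  "thurston_flow T p q =
     (if adjacent p q then chess_sign p * (if {p, q} \<in> T then -3 else 1) else 0)"

lemma skewI: "(\<And>p q. f q p = - f p q) \<Longrightarrow> skew f"
  unfolding skew_def by blast

lemma skewD: "skew f \<Longrightarrow> f q p = - f p q"
  unfolding skew_def by blast

lemma skew_add:
  assumes "skew f" and "skew g"
  shows "skew (\<lambda>p q. f p q + g p q)"
proof (rule skewI)
  fix p q
  show "f q p + g q p = - (f p q + g p q)"
    using skewD[OF assms(1), of p q] skewD[OF assms(2), of p q] by simp
qed

lemma skew_diff:
  assumes "skew f" and "skew g"
  shows "skew (\<lambda>p q. f p q - g p q)"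
proof (rule skewI)
  fix p q
  show "f q p - g q p = - (f p q - g p q)"
    using skewD[OF assms(1), of p q] skewD[OF assms(2), of p q] by simp
qed

lemma skew_sum:
  assumes "\<And>i. i \<in> I \<Longrightarrow> skew (g i)"
  shows "skew (\<lambda>p q. \<Sum>i\<in>I. k i * g i p q)"
proof (rule skewI)
  fix p q
  have "(\<Sum>i\<in>I. k i * g i q p) = (\<Sum>i\<in>I. - (k i * g i p q))"
  proof (rule sum.cong)
    fix i
    assume "i \<in> I"
    then show "k i * g i q p = - (k i * g i p q)"
      using skewD[OF assms, of i p q] by simp
  qed simp
  then show "(\<Sum>i\<in>I. k i * g i q p) = - (\<Sum>i\<in>I. k i * g i p q)"
    by (simp add: sum_negf)
qed

lemma skew_thurston_flow: "skew (thurston_flow T)"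
proof (rule skewI)
  fix p q
  show "thurston_flow T q p = - thurston_flow T p q"
  proof (cases "adjacent p q")
    case True
    then show ?thesis
      using adjacent_sym[OF True] chess_sign_adjacent[OF True]
      by (simp add: thurston_flow_def insert_commute)
  next
    case False
    then have "\<not> adjacent q p"
      using adjacent_sym by blast
    with False show ?thesis
      by (simp add: thurston_flow_def)
  qed
qed

lemma thurston_flow_cases:
  "adjacent p q \<Longrightarrow> thurston_flow T p q = chess_sign p \<or> thurston_flow T p q = -3 * chess_sign p"
  by (simp add: thurston_flow_def)

lemma divergence_add: "divergence (\<lambda>p q. f p q + g p q) c = divergence f c + divergence g c"
  by (simp add: divergence_def)

lemma divergence_diff: "divergence (\<lambda>p q. f p q - g p q) c = divergence f c - divergence g c"
  by (simp add: divergence_def)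

lemma divergence_sum:
  "divergence (\<lambda>p q. \<Sum>i\<in>I. k i * g i p q) c = (\<Sum>i\<in>I. k i * divergence (g i) c)"
  by (simp add: divergence_def sum.distrib algebra_simps sum_distrib_left)

lemma tiling_partner:
  assumes T: "T \<in> tilings R" and c: "c \<in> R"
  obtains n where "adjacent c n" and "\<And>m. {c, m} \<in> T \<longleftrightarrow> m = n"
proof -
  have "\<exists>!d. d \<in> T \<and> c \<in> d"
    using T c unfolding tilings_def by blast
  then obtain d where d: "d \<in> T" "c \<in> d" and d_unique: "\<And>e. e \<in> T \<Longrightarrow> c \<in> e \<Longrightarrow> e = d"
    by metis
  have "d \<in> dominoes R"
    using T d unfolding tilings_def by blast
  then obtain p q where pq: "d = {p, q}" "adjacent p q"
    unfolding dominoes_def by blast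
  define n where "n = (if c = p then q else p)"
  have dn: "d = {c, n}"
    using pq d(2) unfolding n_def by auto
  have cn: "adjacent c n"
    using pq d(2) unfolding n_def by (auto intro: adjacent_sym)
  have "c \<noteq> n"
    using cn not_adjacent_self by blast
  have "{c, m} \<in> T \<longleftrightarrow> m = n" for m
  proof
    assume "{c, m} \<in> T"
    then have "{c, m} = {c, n}"
      using d_unique dn by blast
    with \<open>c \<noteq> n\<close> show "m = n"
      by (auto simp: doubleton_eq_iff)
  qed (use d dn in simp)
  with cn show thesis
    by (rule that)
qed

lemma tiling_domino_in_region:
  assumes "T \<in> tilings R" and "{p, q} \<in> T"
  shows "p \<in> R" and "q \<in> R"
  using assms unfolding tilings_def dominoes_def by (auto simp: doubleton_eq_iff)

lemma divergence_thurston_flow: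
  assumes T: "T \<in> tilings R"
  shows "divergence (thurston_flow T) c = (if c \<in> R then 0 else 4 * chess_sign c)"
proof -
  obtain x y where c: "c = (x, y)"
    by (cases c)
  let ?w = "\<lambda>n. if {c, n} \<in> T then -3 else 1 :: int"
  have div: "divergence (thurston_flow T) c =
      chess_sign c * (?w (x + 1, y) + ?w (x - 1, y) + ?w (x, y + 1) + ?w (x, y - 1))"
    unfolding divergence_def thurston_flow_def c by (simp add: adjacent_iff algebra_simps)
  show ?thesis
  proof (cases "c \<in> R")
    case True
    then obtain n where "adjacent c n" and partner: "\<And>m. {c, m} \<in> T \<longleftrightarrow> m = n"
      using tiling_partner[OF T] by blast
    then have "n = (x + 1, y) \<or> n = (x - 1, y) \<or> n = (x, y + 1) \<or> n = (x, y - 1)"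
      by (simp add: c adjacent_iff)
    then show ?thesis
      using True div partner by (elim disjE) simp_all
  next
    case False
    then have "{c, n} \<notin> T" for n
      using tiling_domino_in_region(1)[OF T] by blast
    with False div show ?thesis
      by simp
  qed
qed

section \<open>Potentials\<close>

text \<open>Lattice points are the corners of cells: the point (x, y) is the lower left corner of the
  cell (x, y). The potential at v sums f along the lattice path from (a, a) right to (fst v, a)
  and then up to v, counting f p q whenever the path passes between the cell p on its left and
  the cell q on its right.\<close>

definition potential :: "int \<Rightarrow> (cell \<Rightarrow> cell \<Rightarrow> int) \<Rightarrow> int \<times> int \<Rightarrow> int" where
  "potential a f v =
     (\<Sum>i\<in>{a..<fst v}. f (i, a) (i, a - 1)) + (\<Sum>j\<in>{a..<snd v}. f (fst v - 1, j) (fst v, j))"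

lemma potential_up:
  assumes "a \<le> y"
  shows "potential a f (x, y + 1) = potential a f (x, y) + f (x - 1, y) (x, y)"
proof -
  have "{a..<y + 1} = insert y {a..<y}"
    using assms by auto
  then show ?thesis
    by (simp add: potential_def)
qed

text \<open>The two lattice paths to (x + 1, y) differ by the boundary of the column below, through
  which the net flux vanishes.\<close>

lemma potential_right:
  assumes f: "skew f" and "a \<le> x" and "a \<le> y"
    and balanced: "\<And>j. a \<le> j \<Longrightarrow> j < y \<Longrightarrow> divergence f (x, j) = 0"
  shows "potential a f (x + 1, y) = potential a f (x, y) + f (x, y) (x, y - 1)"
  using \<open>a \<le> y\<close> balanced
proof (induction y rule: int_ge_induct)
  case base
  have "{a..<x + 1} = insert x {a..<x}"
    using \<open>a \<le> x\<close> by auto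
  then show ?case
    by (simp add: potential_def)
next
  case (step z)
  have IH: "potential a f (x + 1, z) = potential a f (x, z) + f (x, z) (x, z - 1)"
    using step.IH step.prems by simp
  have "divergence f (x, z) = 0"
    using step.hyps step.prems by simp
  then have "f (x, z) (x + 1, z) + f (x, z) (x - 1, z) + f (x, z) (x, z + 1) + f (x, z) (x, z - 1) = 0"
    unfolding divergence_def by simp
  moreover have "f (x - 1, z) (x, z) = - f (x, z) (x - 1, z)" "f (x, z + 1) (x, z) = - f (x, z) (x, z + 1)"
    using skewD[OF f] by blast+
  moreover have "potential a f (x + 1, z + 1) = potential a f (x + 1, z) + f (x, z) (x + 1, z)"
    using potential_up[OF step.hyps, of f "x + 1"] by simp
  moreover have "potential a f (x, z + 1) = potential a f (x, z) + f (x - 1, z) (x, z)"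
    using potential_up[OF step.hyps] .
  ultimately show ?case
    unfolding add_diff_cancel_right' using IH by linarith
qed

lemma potential_add: "potential a (\<lambda>p q. f p q + g p q) v = potential a f v + potential a g v"
  by (simp add: potential_def sum.distrib)

lemma potential_diff: "potential a (\<lambda>p q. f p q - g p q) v = potential a f v - potential a g v"
  by (simp add: potential_def sum_subtractf)

lemma potential_cmult: "potential a (\<lambda>p q. k * f p q) v = k * potential a f v"
  by (simp add: potential_def sum_distrib_left algebra_simps)

fun cells_around :: "int \<times> int \<Rightarrow> cell set" where
  "cells_around (x, y) = {(x, y), (x - 1, y), (x - 1, y - 1), (x, y - 1)}"

text \<open>The cells around a lattice point, traversed clockwise.\<close>

fun cycle_around :: "int \<times> int \<Rightarrow> (cell \<times> cell) set" where
  "cycle_around (x, y) =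
     {((x, y), (x, y - 1)), ((x, y - 1), (x - 1, y - 1)), ((x - 1, y - 1), (x - 1, y)), ((x - 1, y), (x, y))}"

definition circulation :: "int \<times> int \<Rightarrow> cell \<Rightarrow> cell \<Rightarrow> int" where
  "circulation v p q = of_bool ((p, q) \<in> cycle_around v) - of_bool ((q, p) \<in> cycle_around v)"

lemma mem_cells_around:
  "c \<in> cells_around v \<longleftrightarrow> v \<in> {c, (fst c + 1, snd c), (fst c, snd c + 1), (fst c + 1, snd c + 1)}"
  by (cases c; cases v) auto

lemma adjacent_cycle_around: "(p, q) \<in> cycle_around v \<Longrightarrow> adjacent p q"
  by (cases v) (auto simp: adjacent_iff)

text \<open>A lattice path crosses the cycle around v only in the column of v, once on the way in and
  once on the way out unless it ends at v.\<close>

lemma potential_circulation: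
  assumes "a < snd v"
  shows "potential a (circulation v) w = - of_bool (w = v)"
proof -
  obtain x y where v: "v = (x, y)"
    by (cases v)
  obtain X Y where w: "w = (X, Y)"
    by (cases w)
  have bottom: "(\<Sum>i\<in>{a..<X}. circulation v (i, a) (i, a - 1)) = 0"
    using assms by (intro sum.neutral) (auto simp: circulation_def v)
  have "(\<Sum>j\<in>{a..<Y}. circulation v (X - 1, j) (X, j)) =
        (\<Sum>j\<in>{a..<Y}. (if j = y then of_bool (X = x) else 0) - (if j = y - 1 then of_bool (X = x) else 0))"
    by (intro sum.cong) (auto simp: circulation_def v)
  also have "\<dots> = - of_bool (X = x \<and> Y = y)"
    using assms by (simp add: sum_subtractf v)
  finally show ?thesis
    using bottom by (simp add: potential_def v w)
qed

section \<open>Flows around a region without holes\<close>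

definition unit_flow :: "cell \<Rightarrow> cell \<Rightarrow> cell \<Rightarrow> cell \<Rightarrow> int" where
  "unit_flow c c' p q = (if p = c \<and> q = c' then 1 else if p = c' \<and> q = c then -1 else 0)"

lemma skew_unit_flow: "c \<noteq> c' \<Longrightarrow> skew (unit_flow c c')"
  by (auto simp: skew_def unit_flow_def)

lemma divergence_unit_flow:
  assumes "adjacent c c'"
  shows "divergence (unit_flow c c') z = of_bool (z = c) - of_bool (z = c')"
proof -
  obtain x y where c: "c = (x, y)"
    by (cases c)
  obtain u v where z: "z = (u, v)"
    by (cases z)
  from assms have "c' = (x + 1, y) \<or> c' = (x - 1, y) \<or> c' = (x, y + 1) \<or> c' = (x, y - 1)"
    by (simp add: c adjacent_iff)
  then show ?thesis
    by (elim disjE) (auto simp: divergence_def unit_flow_def c z)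
qed

definition flow_avoids :: "cell set \<Rightarrow> (cell \<Rightarrow> cell \<Rightarrow> int) \<Rightarrow> bool" where
  "flow_avoids R f \<longleftrightarrow> (\<forall>p q. p \<in> R \<or> q \<in> R \<longrightarrow> f p q = 0)"

definition flow_within :: "cell set \<Rightarrow> (cell \<Rightarrow> cell \<Rightarrow> int) \<Rightarrow> bool" where
  "flow_within R f \<longleftrightarrow> (\<forall>p q. p \<notin> R \<or> q \<notin> R \<longrightarrow> f p q = 0)"

inductive escapes :: "cell set \<Rightarrow> int \<Rightarrow> int \<Rightarrow> cell \<Rightarrow> bool" for R a b where
  outside: "c \<notin> {a..<b} \<times> {a..<b} \<Longrightarrow> escapes R a b c"
| step: "c \<notin> R \<Longrightarrow> adjacent c c' \<Longrightarrow> escapes R a b c' \<Longrightarrow> escapes R a b c"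

definition difference_flow :: "cell set set \<Rightarrow> cell set set \<Rightarrow> cell \<Rightarrow> cell \<Rightarrow> int" where
  "difference_flow T T' p q = thurston_flow T p q - thurston_flow T' p q"

lemma skew_difference_flow: "skew (difference_flow T T')"
  unfolding difference_flow_def by (intro skew_diff skew_thurston_flow)

lemma divergence_difference_flow:
  "T \<in> tilings R \<Longrightarrow> T' \<in> tilings R \<Longrightarrow> divergence (difference_flow T T') c = 0"
  unfolding difference_flow_def by (simp add: divergence_diff divergence_thurston_flow)

lemma flow_within_difference_flow:
  assumes "T \<in> tilings R" and "T' \<in> tilings R"
  shows "flow_within R (difference_flow T T')"
  unfolding flow_within_def difference_flow_def thurston_flow_def
  using tiling_domino_in_region[OF assms(1)] tiling_domino_in_region[OF assms(2)] by auto

lemma four_dvd_difference_flow: "4 dvd difference_flow T T' p q"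
  by (auto simp: difference_flow_def thurston_flow_def algebra_simps)

locale boxed_region =
  fixes R :: "cell set" and a b :: int
  assumes region_in_box: "R \<subseteq> {a..<b} \<times> {a..<b}"
    and box_nonempty: "a < b"
    and escapes_box: "\<And>c. c \<notin> R \<Longrightarrow> escapes R a b c"
begin

abbreviation box_cells :: "cell set" where
  "box_cells \<equiv> {a..<b} \<times> {a..<b}"

abbreviation box_vertices :: "(int \<times> int) set" where
  "box_vertices \<equiv> {a..b} \<times> {a..b}"

definition divergence_free :: "(cell \<Rightarrow> cell \<Rightarrow> int) \<Rightarrow> bool" where
  "divergence_free f \<longleftrightarrow> (\<forall>c\<in>box_cells. divergence f c = 0)"

lemma potential_right_free:
  assumes "skew f" and "divergence_free f" and "a \<le> x" and "x < b" and "a \<le> y" and "y \<le> b"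
  shows "potential a f (x + 1, y) = potential a f (x, y) + f (x, y) (x, y - 1)"
  using assms by (intro potential_right) (auto simp: divergence_free_def)

lemma escapes_not_in_region: "escapes R a b c \<Longrightarrow> c \<notin> R"
  by (induction rule: escapes.induct) (use region_in_box in auto)

lemma escape_flow:
  "escapes R a b c \<Longrightarrow>
     \<exists>P. skew P \<and> flow_avoids R P \<and> (\<forall>z\<in>box_cells. divergence P z = of_bool (z = c))"
proof (induction rule: escapes.induct)
  case (outside c)
  then show ?case
    by (intro exI[of _ "\<lambda>p q. 0"]) (auto simp: skew_def flow_avoids_def divergence_def)
next
  case (step c c')
  then obtain P where P: "skew P" "flow_avoids R P" "\<forall>z\<in>box_cells. divergence P z = of_bool (z = c')"
    by blast
  have "c \<noteq> c'"
    using step.hyps(2) not_adjacent_self by blast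
  let ?Q = "\<lambda>p q. P p q + unit_flow c c' p q"
  have "skew ?Q"
    using P(1) skew_unit_flow[OF \<open>c \<noteq> c'\<close>] by (rule skew_add)
  moreover have "flow_avoids R ?Q"
    using P(2) step.hyps(1) escapes_not_in_region[OF step.hyps(3)]
    unfolding flow_avoids_def unit_flow_def by auto
  moreover have "\<forall>z\<in>box_cells. divergence ?Q z = of_bool (z = c)"
    using P(3) divergence_unit_flow[OF step.hyps(2)] by (simp add: divergence_add)
  ultimately show ?case
    by blast
qed

lemma outer_flow_exists:
  "\<exists>E. skew E \<and> flow_avoids R E \<and>
       (\<forall>z\<in>box_cells. divergence E z = (if z \<in> R then 0 else -4 * chess_sign z))"
proof -
  have "\<forall>c\<in>box_cells - R. \<exists>P. skew P \<and> flow_avoids R P \<and> (\<forall>z\<in>box_cells. divergence P z = of_bool (z = c))"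
    using escape_flow escapes_box by blast
  then obtain P where P: "\<And>c. c \<in> box_cells - R \<Longrightarrow>
      skew (P c) \<and> flow_avoids R (P c) \<and> (\<forall>z\<in>box_cells. divergence (P c) z = of_bool (z = c))"
    by metis
  define E where "E = (\<lambda>p q. \<Sum>c\<in>box_cells - R. (-4 * chess_sign c) * P c p q)"
  have "skew E"
    unfolding E_def using P by (intro skew_sum) blast
  moreover have "flow_avoids R E"
    using P unfolding flow_avoids_def E_def by auto
  moreover have "divergence E z = (if z \<in> R then 0 else -4 * chess_sign z)" if z: "z \<in> box_cells" for z
  proof -
    have "divergence E z = (\<Sum>c\<in>box_cells - R. (-4 * chess_sign c) * divergence (P c) z)"
      unfolding E_def by (rule divergence_sum)
    also have "\<dots> = (\<Sum>c\<in>box_cells - R. if z = c then -4 * chess_sign c else 0)"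
      using P z by (intro sum.cong) auto
    also have "\<dots> = (if z \<in> R then 0 else -4 * chess_sign z)"
      using z by (simp add: sum.delta)
    finally show ?thesis .
  qed
  ultimately show ?thesis
    by blast
qed

text \<open>A flow outside R cancelling the divergence of Thurston's flow there; it exists because every
  cell outside R can escape the box through cells outside R.\<close>

definition outer_flow :: "cell \<Rightarrow> cell \<Rightarrow> int" where
  "outer_flow = (SOME E. skew E \<and> flow_avoids R E \<and>
       (\<forall>z\<in>box_cells. divergence E z = (if z \<in> R then 0 else -4 * chess_sign z)))"

lemma outer_flow:
  "skew outer_flow" "flow_avoids R outer_flow"
  "\<And>z. z \<in> box_cells \<Longrightarrow> divergence outer_flow z = (if z \<in> R then 0 else -4 * chess_sign z)"
  using someI_ex[OF outer_flow_exists] unfolding outer_flow_def[symmetric] by auto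

definition balanced_flow :: "cell set set \<Rightarrow> cell \<Rightarrow> cell \<Rightarrow> int" where
  "balanced_flow T p q = thurston_flow T p q + outer_flow p q"

definition height :: "cell set set \<Rightarrow> int \<times> int \<Rightarrow> int" where
  "height T = potential a (balanced_flow T)"

definition height_diff :: "cell set set \<Rightarrow> cell set set \<Rightarrow> int \<times> int \<Rightarrow> int" where
  "height_diff T T' = potential a (difference_flow T T')"

lemma skew_balanced_flow: "skew (balanced_flow T)"
  using skew_add[OF skew_thurston_flow outer_flow(1)] unfolding balanced_flow_def by simp

lemma divergence_free_balanced_flow: "T \<in> tilings R \<Longrightarrow> divergence_free (balanced_flow T)"
  unfolding divergence_free_def balanced_flow_def
  by (simp add: divergence_add divergence_thurston_flow outer_flow(3))

lemma balanced_flow_region: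
  assumes "p \<in> R \<or> q \<in> R"
  shows "balanced_flow T p q = thurston_flow T p q"
proof -
  have "outer_flow p q = 0"
    using outer_flow(2) assms unfolding flow_avoids_def by blast
  then show ?thesis
    by (simp add: balanced_flow_def)
qed

lemma divergence_free_difference_flow:
  "T \<in> tilings R \<Longrightarrow> T' \<in> tilings R \<Longrightarrow> divergence_free (difference_flow T T')"
  unfolding divergence_free_def by (simp add: divergence_difference_flow)

lemma height_diff_eq: "height_diff T T' v = height T v - height T' v"
proof -
  have "difference_flow T T' = (\<lambda>p q. balanced_flow T p q - balanced_flow T' p q)"
    by (simp add: fun_eq_iff difference_flow_def balanced_flow_def)
  then show ?thesis
    unfolding height_diff_def height_def by (simp add: potential_diff)
qed

lemma height_diff_swap: "height_diff T' T v = - height_diff T T' v"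
  by (simp add: height_diff_eq)

lemma four_dvd_height_diff: "4 dvd height_diff T T' v"
  unfolding height_diff_def potential_def by (intro dvd_add dvd_sum four_dvd_difference_flow)

context
  fixes f :: "cell \<Rightarrow> cell \<Rightarrow> int"
  assumes f_skew: "skew f" and f_free: "divergence_free f" and f_within: "flow_within R f"
begin

lemma potential_zero_bottom: "potential a f (x, a) = 0"
proof -
  have "(i, a - 1) \<notin> R" for i
    using region_in_box by auto
  then show ?thesis
    using f_within unfolding potential_def flow_within_def by simp
qed

lemma potential_zero_left: "potential a f (a, y) = 0"
proof -
  have "(a - 1, j) \<notin> R" for j
    using region_in_box by auto
  then show ?thesis
    using f_within unfolding potential_def flow_within_def by simp
qed

lemma potential_zero_right: "a \<le> y \<Longrightarrow> y \<le> b \<Longrightarrow> potential a f (b, y) = 0"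
proof (induction y rule: int_ge_induct)
  case base
  show ?case
    by (rule potential_zero_bottom)
next
  case (step y)
  have "(b, y) \<notin> R"
    using region_in_box by auto
  then have "f (b - 1, y) (b, y) = 0"
    using f_within unfolding flow_within_def by blast
  then show ?case
    using potential_up[OF step.hyps, of f b] step by simp
qed

lemma potential_zero_top: "a \<le> x \<Longrightarrow> x \<le> b \<Longrightarrow> potential a f (x, b) = 0"
proof (induction x rule: int_ge_induct)
  case base
  show ?case
    by (rule potential_zero_left)
next
  case (step x)
  have "(x, b) \<notin> R"
    using region_in_box by auto
  then have "f (x, b) (x, b - 1) = 0"
    using f_within unfolding flow_within_def by blast
  then show ?case
    using potential_right_free[OF f_skew f_free step.hyps, of b] step box_nonempty by simp
qed

lemma potential_zero_boundary:
  "v \<in> box_vertices \<Longrightarrow> fst v \<in> {a, b} \<or> snd v \<in> {a, b} \<Longrightarrow> potential a f v = 0"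
  using potential_zero_bottom potential_zero_left potential_zero_right potential_zero_top
  by (cases v) auto

text \<open>No flow crosses the sides of a cell outside R, so the potential is constant on its corners;
  along an escape path this constant is carried to the boundary of the box.\<close>

lemma potential_zero_escaping:
  "escapes R a b c \<Longrightarrow> c \<in> cells_around v \<Longrightarrow> v \<in> box_vertices \<Longrightarrow> potential a f v = 0"
proof (induction arbitrary: v rule: escapes.induct)
  case (outside c)
  obtain x y where "c = (x, y)"
    by (cases c)
  with outside show ?case
    by (intro potential_zero_boundary) (auto simp: mem_cells_around)
next
  case (step c c')
  obtain x y where c: "c = (x, y)"
    by (cases c)
  show ?case
  proof (cases "c \<in> box_cells")
    case False
    then show ?thesis
      using step.prems by (intro potential_zero_boundary) (auto simp: mem_cells_around c)
  next
    case True
    then have xy: "a \<le> x" "x < b" "a \<le> y" "y < b"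
      by (auto simp: c)
    have no_flow: "f (x, y) (x, y - 1) = 0" "f (x - 1, y) (x, y) = 0" "f (x, y) (x + 1, y) = 0"
      using f_within step.hyps(1) unfolding flow_within_def c by auto
    have corners: "potential a f (x + 1, y) = potential a f (x, y)"
      "potential a f (x, y + 1) = potential a f (x, y)"
      "potential a f (x + 1, y + 1) = potential a f (x + 1, y)"
      using potential_right_free[OF f_skew f_free, of x y] potential_up[of a y f x]
        potential_up[of a y f "x + 1"] xy no_flow by simp_all
    have "c' = (x + 1, y) \<or> c' = (x - 1, y) \<or> c' = (x, y + 1) \<or> c' = (x, y - 1)"
      using step.hyps(2) by (simp add: c adjacent_iff)
    then have "potential a f (x, y) = 0"
      using step.IH[of "(x + 1, y)"] step.IH[of "(x, y)"] step.IH[of "(x, y + 1)"] corners xy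
      by (auto simp: mem_cells_around)
    then show ?thesis
      using step.prems corners by (auto simp: mem_cells_around c)
  qed
qed

lemma potential_zero_unless_interior:
  "v \<in> box_vertices \<Longrightarrow> \<not> cells_around v \<subseteq> R \<Longrightarrow> potential a f v = 0"
  using potential_zero_escaping escapes_box by blast

end

lemma potential_steps_across:
  assumes f: "skew f" "divergence_free f" and p: "p \<in> box_cells" and pq: "adjacent p q"
  obtains w w' where "w \<in> box_vertices" "w' \<in> box_vertices" "potential a f w' = potential a f w + f p q"
proof -
  obtain x y where p_eq: "p = (x, y)"
    by (cases p)
  have xy: "a \<le> x" "x < b" "a \<le> y" "y < b"
    using p by (auto simp: p_eq)
  have up: "potential a f (x', y + 1) = potential a f (x', y) + f (x' - 1, y) (x', y)" for x'
    using potential_up xy by blast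
  have right: "potential a f (x + 1, y') = potential a f (x, y') + f (x, y') (x, y' - 1)"
    if "y' = y \<or> y' = y + 1" for y'
    using potential_right_free[OF f, of x y'] that xy by auto
  have "q = (x + 1, y) \<or> q = (x - 1, y) \<or> q = (x, y + 1) \<or> q = (x, y - 1)"
    using pq by (simp add: p_eq adjacent_iff)
  then show thesis
  proof (elim disjE)
    assume "q = (x + 1, y)"
    then show thesis
      using that[of "(x + 1, y)" "(x + 1, y + 1)"] up[of "x + 1"] xy by (simp add: p_eq)
  next
    assume "q = (x - 1, y)"
    then show thesis
      using that[of "(x, y + 1)" "(x, y)"] up[of x] skewD[OF f(1), of p q] xy by (simp add: p_eq)
  next
    assume "q = (x, y + 1)"
    then show thesis
      using that[of "(x + 1, y + 1)" "(x, y + 1)"] right[of "y + 1"] skewD[OF f(1), of p q] xy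
      by (simp add: p_eq)
  next
    assume "q = (x, y - 1)"
    then show thesis
      using that[of "(x, y)" "(x + 1, y)"] right[of y] xy by (simp add: p_eq)
  qed
qed

lemma height_diff_zero_imp_eq:
  assumes T: "T \<in> tilings R" and T': "T' \<in> tilings R"
    and zero: "\<And>w. w \<in> box_vertices \<Longrightarrow> height_diff T T' w = 0"
  shows "T = T'"
proof -
  have same: "{p, q} \<in> T \<longleftrightarrow> {p, q} \<in> T'" if p: "p \<in> R" and pq: "adjacent p q" for p q
  proof -
    obtain w w' where "w \<in> box_vertices" "w' \<in> box_vertices"
      "potential a (difference_flow T T') w' = potential a (difference_flow T T') w + difference_flow T T' p q"
      using potential_steps_across[OF skew_difference_flow divergence_free_difference_flow[OF T T']]
        p pq region_in_box by blast
    then have "difference_flow T T' p q = 0"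
      using zero unfolding height_diff_def by simp
    then show ?thesis
      using pq chess_sign_cases[of p]
      by (auto simp: difference_flow_def thurston_flow_def split: if_splits)
  qed
  have dominoes: "X \<subseteq> {{p, q} | p q. p \<in> R \<and> adjacent p q}" if "X \<in> tilings R" for X
    using that unfolding tilings_def dominoes_def by blast
  show ?thesis
    using dominoes[OF T] dominoes[OF T'] same by blast
qed

lemma height_step_around:
  assumes cells: "cells_around (x, y) \<subseteq> R" and pq: "(p, q) \<in> cycle_around (x, y)"
  obtains w where "w \<in> box_vertices"
    and "\<And>X. X \<in> tilings R \<Longrightarrow> height X w = height X (x, y) + thurston_flow X p q"
proof -
  have R: "(x, y) \<in> R" "(x - 1, y) \<in> R" "(x - 1, y - 1) \<in> R" "(x, y - 1) \<in> R"
    using cells by auto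
  then have xy: "a < x" "x < b" "a < y" "y < b"
    using region_in_box by auto
  have right: "height X (x' + 1, y') = height X (x', y') + balanced_flow X (x', y') (x', y' - 1)"
    if "X \<in> tilings R" "a \<le> x'" "x' < b" "a \<le> y'" "y' \<le> b" for X x' y'
    unfolding height_def
    using potential_right_free[OF skew_balanced_flow divergence_free_balanced_flow[OF that(1)]] that(2-)
    by blast
  have up: "height X (x', y' + 1) = height X (x', y') + balanced_flow X (x' - 1, y') (x', y')"
    if "a \<le> y'" for X x' y'
    unfolding height_def using that by (rule potential_up)
  have flow: "balanced_flow X p q = thurston_flow X p q" "balanced_flow X q p = - thurston_flow X p q" for X
    using pq R balanced_flow_region[of p q X] skewD[OF skew_balanced_flow, of X p q] by auto
  from pq consider "p = (x, y)" "q = (x, y - 1)" | "p = (x, y - 1)" "q = (x - 1, y - 1)"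
    | "p = (x - 1, y - 1)" "q = (x - 1, y)" | "p = (x - 1, y)" "q = (x, y)"
    by auto
  then show thesis
  proof cases
    case 1
    then show thesis
      using that[of "(x + 1, y)"] right[of _ x y] flow xy by simp
  next
    case 2
    then show thesis
      using that[of "(x, y - 1)"] up[of "y - 1" _ x] flow xy by simp
  next
    case 3
    then show thesis
      using that[of "(x - 1, y)"] right[of _ "x - 1" y] flow xy by simp
  next
    case 4
    then show thesis
      using that[of "(x, y + 1)"] up[of y _ x] flow xy by simp
  qed
qed

text \<open>Breaking ties by the height of T excludes the sides on which T and T' agree.\<close>

lemma peak_descends:
  assumes T: "T \<in> tilings R" and T': "T' \<in> tilings R" and v: "v \<in> box_vertices"
    and pos: "0 < height_diff T T' v"
    and peak: "\<And>w. w \<in> box_vertices \<Longrightarrow> height_diff T T' w \<le> height_diff T T' v"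
    and top: "\<And>w. w \<in> box_vertices \<Longrightarrow> height_diff T T' w = height_diff T T' v \<Longrightarrow> height T w \<le> height T v"
  shows "cells_around v \<subseteq> R" and "\<And>p q. (p, q) \<in> cycle_around v \<Longrightarrow> thurston_flow T p q < 0"
proof -
  show cells: "cells_around v \<subseteq> R"
    using potential_zero_unless_interior[OF skew_difference_flow divergence_free_difference_flow[OF T T']
        flow_within_difference_flow[OF T T'] v] pos
    unfolding height_diff_def by force
  fix p q
  assume pq: "(p, q) \<in> cycle_around v"
  obtain x y where v_eq: "v = (x, y)"
    by (cases v)
  obtain w where w: "w \<in> box_vertices"
    and step: "\<And>X. X \<in> tilings R \<Longrightarrow> height X w = height X v + thurston_flow X p q"
    using height_step_around cells pq unfolding v_eq by blast
  have "adjacent p q"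
    using pq by (rule adjacent_cycle_around)
  then have "thurston_flow T p q \<in> {chess_sign p, -3 * chess_sign p}"
    "thurston_flow T' p q \<in> {chess_sign p, -3 * chess_sign p}"
    using thurston_flow_cases by blast+
  moreover have "height_diff T T' w = height_diff T T' v + thurston_flow T p q - thurston_flow T' p q"
    using step[OF T] step[OF T'] by (simp add: height_diff_eq)
  ultimately show "thurston_flow T p q < 0"
    using peak[OF w] top[OF w] step[OF T] chess_sign_cases[of p] by auto
qed

lemma height_diff_flip:
  assumes cells: "cells_around v \<subseteq> R"
    and flow: "\<And>p q. thurston_flow T2 p q = thurston_flow T p q + 4 * circulation v p q"
  shows "height_diff T2 T' w = height_diff T T' w - 4 * of_bool (w = v)"
proof -
  have "a < snd v"
    using cells region_in_box by (cases v) auto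
  have "difference_flow T2 T' = (\<lambda>p q. 4 * circulation v p q + difference_flow T T' p q)"
    using flow by (simp add: fun_eq_iff difference_flow_def)
  then show ?thesis
    unfolding height_diff_def
    using potential_circulation[OF \<open>a < snd v\<close>] by (simp add: potential_add potential_cmult)
qed

end

definition flip_move :: "cell set \<Rightarrow> cell set set \<Rightarrow> cell set set \<Rightarrow> bool" where
  "flip_move R T T' \<longleftrightarrow> T \<in> tilings R \<and>
     (\<exists>D1 D2. (D1, D2) \<in> local_flips R \<and> D1 \<subseteq> T \<and> D2 \<inter> T = {} \<and> T' = T - D1 \<union> D2)"

lemma local_flip_swap: "(D1, D2) \<in> local_flips R \<Longrightarrow> (D2, D1) \<in> local_flips R"
  unfolding local_flips_def by blast

lemma local_flip_dominoes:
  assumes "(D1, D2) \<in> local_flips R"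
  shows "D2 \<subseteq> dominoes R" and "\<Union>D1 = \<Union>D2" and "D1 \<inter> D2 = {}" and "finite D1"
    and "\<And>c d d'. d \<in> D2 \<Longrightarrow> d' \<in> D2 \<Longrightarrow> c \<in> d \<Longrightarrow> c \<in> d' \<Longrightarrow> d = d'"
proof -
  obtain i j where block: "{(i, j), (i + 1, j), (i, j + 1), (i + 1, j + 1)} \<subseteq> R"
    and D: "D1 = {{(i, j), (i + 1, j)}, {(i, j + 1), (i + 1, j + 1)}} \<and>
              D2 = {{(i, j), (i, j + 1)}, {(i + 1, j), (i + 1, j + 1)}} \<or>
            D2 = {{(i, j), (i + 1, j)}, {(i, j + 1), (i + 1, j + 1)}} \<and>
              D1 = {{(i, j), (i, j + 1)}, {(i + 1, j), (i + 1, j + 1)}}"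
    using assms unfolding local_flips_def by blast
  have "adjacent (i, j) (i + 1, j)" "adjacent (i, j + 1) (i + 1, j + 1)"
    "adjacent (i, j) (i, j + 1)" "adjacent (i + 1, j) (i + 1, j + 1)"
    by (simp_all add: adjacent_def)
  with block have "{{(i, j), (i + 1, j)}, {(i, j + 1), (i + 1, j + 1)},
      {(i, j), (i, j + 1)}, {(i + 1, j), (i + 1, j + 1)}} \<subseteq> dominoes R"
    unfolding dominoes_def by blast
  with D show "D2 \<subseteq> dominoes R"
    by blast
  from D show "\<Union>D1 = \<Union>D2" and "finite D1"
    by auto
  from D show "D1 \<inter> D2 = {}"
    by (auto simp: doubleton_eq_iff)
  from D show "\<And>c d d'. d \<in> D2 \<Longrightarrow> d' \<in> D2 \<Longrightarrow> c \<in> d \<Longrightarrow> c \<in> d' \<Longrightarrow> d = d'"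
    by auto
qed

lemma tiling_replace:
  assumes T: "T \<in> tilings R" and D1: "D1 \<subseteq> T" and D2: "D2 \<subseteq> dominoes R"
    and same_cells: "\<Union>D1 = \<Union>D2"
    and disjoint: "\<And>c d d'. d \<in> D2 \<Longrightarrow> d' \<in> D2 \<Longrightarrow> c \<in> d \<Longrightarrow> c \<in> d' \<Longrightarrow> d = d'"
  shows "T - D1 \<union> D2 \<in> tilings R"
proof -
  have "\<exists>!d. d \<in> T - D1 \<union> D2 \<and> c \<in> d" if c: "c \<in> R" for c
  proof -
    have "\<exists>!d. d \<in> T \<and> c \<in> d"
      using T c unfolding tilings_def by blast
    then obtain d0 where d0: "d0 \<in> T" "c \<in> d0" and d0_unique: "\<And>e. e \<in> T \<Longrightarrow> c \<in> e \<Longrightarrow> e = d0"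
      by metis
    show ?thesis
    proof (cases "c \<in> \<Union>D2")
      case True
      then obtain d where d: "d \<in> D2" "c \<in> d"
        by blast
      have "d0 \<in> D1"
        using True same_cells d0_unique D1 by blast
      show ?thesis
      proof (rule ex1I[of _ d])
        fix e
        assume "e \<in> T - D1 \<union> D2 \<and> c \<in> e"
        then show "e = d"
          using disjoint d d0_unique \<open>d0 \<in> D1\<close> by blast
      qed (use d in blast)
    next
      case False
      then have "d0 \<notin> D1"
        using same_cells d0(2) by blast
      show ?thesis
      proof (rule ex1I[of _ d0])
        fix e
        assume "e \<in> T - D1 \<union> D2 \<and> c \<in> e"
        then show "e = d0"
          using False d0_unique by blast
      qed (use d0 \<open>d0 \<notin> D1\<close> in blast)
    qed
  qed
  moreover have "T - D1 \<union> D2 \<subseteq> dominoes R"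
    using T D2 unfolding tilings_def by blast
  ultimately show ?thesis
    unfolding tilings_def by blast
qed

lemma flip_move_tiling: "flip_move R T T' \<Longrightarrow> T' \<in> tilings R"
  unfolding flip_move_def using tiling_replace local_flip_dominoes by metis

lemma symp_flip_move: "symp (flip_move R)"
proof (rule sympI)
  fix T T'
  assume move: "flip_move R T T'"
  then obtain D1 D2 where D: "(D1, D2) \<in> local_flips R" "D1 \<subseteq> T" "D2 \<inter> T = {}" "T' = T - D1 \<union> D2"
    unfolding flip_move_def by blast
  have "D1 \<inter> D2 = {}"
    using local_flip_dominoes(3)[OF D(1)] .
  then have "D2 \<subseteq> T'" "D1 \<inter> T' = {}" "T = T' - D2 \<union> D1"
    using D by blast+
  then show "flip_move R T' T"
    unfolding flip_move_def using flip_move_tiling[OF move] local_flip_swap[OF D(1)] by blast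
qed

lemma thurston_flow_neg_iff:
  "adjacent p q \<Longrightarrow> thurston_flow T p q < 0 \<longleftrightarrow> ({p, q} \<in> T \<longleftrightarrow> chess_sign p = 1)"
  using chess_sign_cases[of p] by (auto simp: thurston_flow_def)

lemma thurston_flow_toggle:
  assumes "adjacent p q" and "thurston_flow T p q < 0" and "{p, q} \<in> T2 \<longleftrightarrow> {p, q} \<notin> T"
  shows "thurston_flow T2 p q = thurston_flow T p q + 4"
  using assms chess_sign_cases[of p] by (auto simp: thurston_flow_def)

lemma cycle_around_asym: "(p, q) \<in> cycle_around v \<Longrightarrow> (q, p) \<notin> cycle_around v"
  by (cases v) auto

text \<open>The sign of Thurston's flow alternates along the cycle, so if it is negative on all four sides
  then the sides covered by dominoes are every other one.\<close>

lemma descending_cycle_dominoes: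
  assumes cells: "cells_around v \<subseteq> R"
    and desc: "\<And>p q. (p, q) \<in> cycle_around v \<Longrightarrow> thurston_flow T p q < 0"
  obtains D1 D2 where "(D1, D2) \<in> local_flips R" and "D1 \<subseteq> T" and "D2 \<inter> T = {}"
    and "D1 \<union> D2 = (\<lambda>(p, q). {p, q}) ` cycle_around v"
proof -
  obtain x y where v: "v = (x, y)"
    by (cases v)
  have mem: "{p, q} \<in> T \<longleftrightarrow> chess_sign p = 1" if "(p, q) \<in> cycle_around v" for p q
    using thurston_flow_neg_iff[OF adjacent_cycle_around[OF that]] desc[OF that] by blast
  have signs: "chess_sign (x, y - 1) = - chess_sign (x, y)" "chess_sign (x - 1, y - 1) = chess_sign (x, y)"
    "chess_sign (x - 1, y) = - chess_sign (x, y)"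
    by (auto simp: chess_sign_def)
  define V where "V = {{(x, y), (x, y - 1)}, {(x - 1, y - 1), (x - 1, y)}}"
  define H where "H = {{(x, y - 1), (x - 1, y - 1)}, {(x - 1, y), (x, y)}}"
  have block: "(V, H) \<in> local_flips R" "(H, V) \<in> local_flips R"
  proof -
    have "{(x - 1, y - 1), (x - 1 + 1, y - 1), (x - 1, y - 1 + 1), (x - 1 + 1, y - 1 + 1)} \<subseteq> R"
      using cells v by auto
    moreover have "H = {{(x - 1, y - 1), (x - 1 + 1, y - 1)}, {(x - 1, y - 1 + 1), (x - 1 + 1, y - 1 + 1)}}"
      unfolding H_def by (simp add: insert_commute)
    moreover have "V = {{(x - 1, y - 1), (x - 1, y - 1 + 1)}, {(x - 1 + 1, y - 1), (x - 1 + 1, y - 1 + 1)}}"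
      unfolding V_def by (simp add: insert_commute)
    ultimately show "(V, H) \<in> local_flips R" "(H, V) \<in> local_flips R"
      unfolding local_flips_def by blast+
  qed
  have union: "V \<union> H = (\<lambda>(p, q). {p, q}) ` cycle_around v"
    unfolding V_def H_def v by auto
  show thesis
  proof (cases "chess_sign (x, y) = 1")
    case True
    then have "V \<subseteq> T" "H \<inter> T = {}"
      unfolding V_def H_def using mem signs by (auto simp: v)
    then show thesis
      using that block(1) union by blast
  next
    case False
    then have "chess_sign (x, y) = -1"
      using chess_sign_cases by blast
    then have "H \<subseteq> T" "V \<inter> T = {}"
      unfolding V_def H_def using mem signs by (auto simp: v)
    then show thesis
      using that block(2) union by (metis Un_commute)
  qed
qed

lemma thurston_flow_toggle_cycle:
  assumes desc: "\<And>p q. (p, q) \<in> cycle_around v \<Longrightarrow> thurston_flow T p q < 0"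
    and toggled: "\<And>p q. (p, q) \<in> cycle_around v \<Longrightarrow> {p, q} \<in> T2 \<longleftrightarrow> {p, q} \<notin> T"
    and kept: "\<And>p q. (p, q) \<notin> cycle_around v \<Longrightarrow> (q, p) \<notin> cycle_around v \<Longrightarrow> {p, q} \<in> T2 \<longleftrightarrow> {p, q} \<in> T"
  shows "thurston_flow T2 p q = thurston_flow T p q + 4 * circulation v p q"
proof -
  consider "(p, q) \<in> cycle_around v" | "(q, p) \<in> cycle_around v"
    | "(p, q) \<notin> cycle_around v" "(q, p) \<notin> cycle_around v"
    by blast
  then show ?thesis
  proof cases
    case 1
    then show ?thesis
      using thurston_flow_toggle[OF adjacent_cycle_around desc toggled] cycle_around_asym
      by (simp add: circulation_def)
  next
    case 2
    then have "thurston_flow T2 q p = thurston_flow T q p + 4"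
      using thurston_flow_toggle[OF adjacent_cycle_around desc toggled] by blast
    then show ?thesis
      using 2 cycle_around_asym skewD[OF skew_thurston_flow, of T p q] skewD[OF skew_thurston_flow, of T2 p q]
      by (simp add: circulation_def)
  next
    case 3
    then show ?thesis
      using kept by (simp add: circulation_def thurston_flow_def)
  qed
qed

lemma flip_descending_cycle:
  assumes T: "T \<in> tilings R" and cells: "cells_around v \<subseteq> R"
    and desc: "\<And>p q. (p, q) \<in> cycle_around v \<Longrightarrow> thurston_flow T p q < 0"
  obtains T2 where "flip_move R T T2"
    and "\<And>p q. thurston_flow T2 p q = thurston_flow T p q + 4 * circulation v p q"
proof -
  obtain D1 D2 where D: "(D1, D2) \<in> local_flips R" "D1 \<subseteq> T" "D2 \<inter> T = {}"
    and sides: "D1 \<union> D2 = (\<lambda>(p, q). {p, q}) ` cycle_around v"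
    using descending_cycle_dominoes[OF cells desc] by blast
  define T2 where "T2 = T - D1 \<union> D2"
  have "flip_move R T T2"
    unfolding flip_move_def T2_def using T D by blast
  moreover have "thurston_flow T2 p q = thurston_flow T p q + 4 * circulation v p q" for p q
  proof (rule thurston_flow_toggle_cycle[OF desc])
    have "D1 \<inter> D2 = {}"
      by (rule local_flip_dominoes(3)[OF D(1)])
    then show "{p', q'} \<in> T2 \<longleftrightarrow> {p', q'} \<notin> T" if "(p', q') \<in> cycle_around v" for p' q'
      using that D sides unfolding T2_def by blast
    show "{p', q'} \<in> T2 \<longleftrightarrow> {p', q'} \<in> T"
      if "(p', q') \<notin> cycle_around v" "(q', p') \<notin> cycle_around v" for p' q'
    proof -
      have "{p', q'} \<notin> D1 \<union> D2"
        using that unfolding sides by (auto simp: doubleton_eq_iff)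
      then show ?thesis
        unfolding T2_def by blast
    qed
  qed
  ultimately show thesis
    by (rule that)
qed

lemma sum_nat_abs_decrease:
  fixes f :: "'a \<Rightarrow> int"
  assumes "finite V" and "v \<in> V" and "4 \<le> f v"
  shows "(\<Sum>w\<in>V. nat \<bar>f w - 4 * of_bool (w = v)\<bar>) < (\<Sum>w\<in>V. nat \<bar>f w\<bar>)"
proof -
  have "(\<Sum>w\<in>V. nat \<bar>f w - 4 * of_bool (w = v)\<bar>) = nat \<bar>f v - 4\<bar> + (\<Sum>w\<in>V - {v}. nat \<bar>f w\<bar>)"
    using assms by (simp add: sum.remove)
  moreover have "(\<Sum>w\<in>V. nat \<bar>f w\<bar>) = nat \<bar>f v\<bar> + (\<Sum>w\<in>V - {v}. nat \<bar>f w\<bar>)"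
    using assms by (simp add: sum.remove)
  ultimately show ?thesis
    using assms(3) by simp
qed

lemma finite_lex_max:
  fixes d h :: "'a \<Rightarrow> 'b::linorder"
  assumes "finite V" and "V \<noteq> {}"
  obtains v where "v \<in> V" and "\<And>w. w \<in> V \<Longrightarrow> d w \<le> d v"
    and "\<And>w. w \<in> V \<Longrightarrow> d w = d v \<Longrightarrow> h w \<le> h v"
proof -
  define top_level where "top_level = {w \<in> V. d w = Max (d ` V)}"
  have "Max (d ` V) \<in> d ` V"
    using assms by (intro Max_in) auto
  then have "finite top_level" "top_level \<noteq> {}"
    unfolding top_level_def using assms(1) by force+
  then obtain v where v_top: "v \<in> top_level" and v_max: "Max (h ` top_level) = h v"
    using obtains_MAX by metis
  show thesis
  proof (rule that)
    show "v \<in> V"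
      using v_top unfolding top_level_def by blast
    show "d w \<le> d v" if "w \<in> V" for w
      using v_top that assms(1) unfolding top_level_def by auto
    show "h w \<le> h v" if "w \<in> V" "d w = d v" for w
    proof -
      have "w \<in> top_level"
        using v_top that unfolding top_level_def by auto
      with \<open>finite top_level\<close> show ?thesis
        using v_max by (metis Max_ge finite_imageI imageI)
    qed
  qed
qed

section \<open>Connectedness of the flip graph\<close>

context boxed_region
begin

definition height_distance :: "cell set set \<Rightarrow> cell set set \<Rightarrow> nat" where
  "height_distance T T' = (\<Sum>w\<in>box_vertices. nat \<bar>height_diff T T' w\<bar>)"

lemma height_distance_swap: "height_distance T' T = height_distance T T'"
proof -
  have "height_diff T' T w = - height_diff T T' w" for w
    by (rule height_diff_swap)
  then show ?thesis
    unfolding height_distance_def by simp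
qed

lemma flip_towards:
  assumes T: "T \<in> tilings R" and T': "T' \<in> tilings R"
    and pos: "\<exists>w\<in>box_vertices. 0 < height_diff T T' w"
  obtains T2 where "flip_move R T T2" and "height_distance T2 T' < height_distance T T'"
proof -
  let ?d = "height_diff T T'"
  have "finite box_vertices" "box_vertices \<noteq> {}"
    using box_nonempty by auto
  then obtain v where v: "v \<in> box_vertices" and peak: "\<And>w. w \<in> box_vertices \<Longrightarrow> ?d w \<le> ?d v"
    and top: "\<And>w. w \<in> box_vertices \<Longrightarrow> ?d w = ?d v \<Longrightarrow> height T w \<le> height T v"
    using finite_lex_max[where d = "height_diff T T'" and h = "height T"] by blast
  have "0 < ?d v"
    using pos peak by force
  then have "4 \<le> ?d v"
    using four_dvd_height_diff[of T T' v] by (auto elim!: dvdE)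
  have cells: "cells_around v \<subseteq> R" and desc: "\<And>p q. (p, q) \<in> cycle_around v \<Longrightarrow> thurston_flow T p q < 0"
    using peak_descends[OF T T' v \<open>0 < ?d v\<close> peak top] by blast+
  obtain T2 where move: "flip_move R T T2"
    and flow: "\<And>p q. thurston_flow T2 p q = thurston_flow T p q + 4 * circulation v p q"
    using flip_descending_cycle[OF T cells desc] by blast
  have "height_distance T2 T' = (\<Sum>w\<in>box_vertices. nat \<bar>?d w - 4 * of_bool (w = v)\<bar>)"
    unfolding height_distance_def using height_diff_flip[OF cells flow] by simp
  also have "\<dots> < height_distance T T'"
    unfolding height_distance_def using v \<open>4 \<le> ?d v\<close> by (intro sum_nat_abs_decrease) auto
  finally show thesis
    using move that by blast
qed

theorem flip_connected: "T \<in> tilings R \<Longrightarrow> T' \<in> tilings R \<Longrightarrow> (flip_move R)\<^sup>*\<^sup>* T T'"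
proof (induction "height_distance T T'" arbitrary: T T' rule: less_induct)
  case less
  note T = less.prems(1) and T' = less.prems(2)
  have "(\<forall>w\<in>box_vertices. height_diff T T' w = 0) \<or> (\<exists>w\<in>box_vertices. 0 < height_diff T T' w) \<or>
      (\<exists>w\<in>box_vertices. height_diff T T' w < 0)"
    by (meson linorder_neqE_linordered_idom)
  then consider (zero) "\<forall>w\<in>box_vertices. height_diff T T' w = 0"
    | (pos) "\<exists>w\<in>box_vertices. 0 < height_diff T T' w"
    | (neg) "\<exists>w\<in>box_vertices. height_diff T T' w < 0"
    by blast
  then show ?case
  proof cases
    case zero
    then have "T = T'"
      using height_diff_zero_imp_eq[OF T T'] by blast
    then show ?thesis
      by simp
  next
    case pos
    then obtain T2 where move: "flip_move R T T2" and closer: "height_distance T2 T' < height_distance T T'"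
      using flip_towards[OF T T'] by blast
    have "(flip_move R)\<^sup>*\<^sup>* T2 T'"
      using less.hyps[OF closer flip_move_tiling[OF move] T'] .
    with move show ?thesis
      by (rule converse_rtranclp_into_rtranclp)
  next
    case neg
    then have "\<exists>w\<in>box_vertices. 0 < height_diff T' T w"
      using height_diff_swap[of T' T] by force
    then obtain T2 where move: "flip_move R T' T2" and closer: "height_distance T2 T < height_distance T' T"
      using flip_towards[OF T' T] by blast
    have "(flip_move R)\<^sup>*\<^sup>* T2 T"
      using less.hyps[OF _ flip_move_tiling[OF move] T] closer height_distance_swap by simp
    with move have "(flip_move R)\<^sup>*\<^sup>* T' T"
      by (rule converse_rtranclp_into_rtranclp)
    then show ?thesis
      by (rule sympD[OF symp_rtranclp[OF symp_flip_move]])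
  qed
qed

end

section \<open>Flip binomials\<close>

lemma gen_ideal_0: "0 \<in> gen_ideal G"
  unfolding gen_ideal_def by (intro CollectI exI[of _ 0]) simp

lemma gen_ideal_base: "g \<in> G \<Longrightarrow> g \<in> gen_ideal G"
  unfolding gen_ideal_def by (intro CollectI exI[of _ 1] exI[of _ "\<lambda>_. 1"] exI[of _ "\<lambda>_. g"]) simp

lemma gen_ideal_add:
  assumes "p \<in> gen_ideal G" and "q \<in> gen_ideal G"
  shows "p + q \<in> gen_ideal G"
proof -
  obtain n :: nat and c g where p: "\<forall>i<n. g i \<in> G" "p = (\<Sum>i<n. c i * g i)"
    using assms(1) unfolding gen_ideal_def by auto
  obtain m :: nat and c' g' where q: "\<forall>i<m. g' i \<in> G" "q = (\<Sum>i<m. c' i * g' i)"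
    using assms(2) unfolding gen_ideal_def by auto
  define C where "C i = (if i < n then c i else c' (i - n))" for i
  define H where "H i = (if i < n then g i else g' (i - n))" for i
  have sum: "(\<Sum>i<n + k. C i * H i) = (\<Sum>i<n. c i * g i) + (\<Sum>i<k. c' i * g' i)" for k
    by (induction k) (simp_all add: C_def H_def)
  have "\<forall>i<n + m. H i \<in> G"
    using p(1) q(1) unfolding H_def by auto
  moreover have "p + q = (\<Sum>i<n + m. C i * H i)"
    using sum[of m] p(2) q(2) by simp
  ultimately show ?thesis
    unfolding gen_ideal_def by (intro CollectI exI[of _ "n + m"] exI[of _ C] exI[of _ H]) simp
qed

lemma gen_ideal_mult:
  assumes "p \<in> gen_ideal G"
  shows "r * p \<in> gen_ideal G"
proof -
  obtain n :: nat and c g where p: "\<forall>i<n. g i \<in> G" "p = (\<Sum>i<n. c i * g i)"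
    using assms unfolding gen_ideal_def by auto
  then have "r * p = (\<Sum>i<n. (r * c i) * g i)"
    by (simp add: sum_distrib_left mult.assoc)
  with p(1) show ?thesis
    unfolding gen_ideal_def by (intro CollectI exI[of _ n] exI[of _ "\<lambda>i. r * c i"] exI[of _ g]) simp
qed

lemma gen_ideal_subset_gen_ideal:
  assumes "G \<subseteq> gen_ideal H"
  shows "gen_ideal G \<subseteq> gen_ideal H"
proof
  fix p
  assume "p \<in> gen_ideal G"
  then obtain n :: nat and c g where p: "\<forall>i<n. g i \<in> G" "p = (\<Sum>i<n. c i * g i)"
    unfolding gen_ideal_def by auto
  have "(\<Sum>i<k. c i * g i) \<in> gen_ideal H" if "k \<le> n" for k
    using that
  proof (induction k)
    case 0
    then show ?case
      by (simp add: gen_ideal_0)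
  next
    case (Suc k)
    then have "c k * g k \<in> gen_ideal H"
      using p(1) assms by (intro gen_ideal_mult) auto
    with Suc show ?case
      by (simp add: gen_ideal_add)
  qed
  then show "p \<in> gen_ideal H"
    using p(2) by simp
qed

lemma ymono_union:
  assumes "finite A" and "finite B" and "A \<inter> B = {}"
  shows "(ymono (A \<union> B) :: 'k::comm_ring_1 ypoly) = ymono A * ymono B"
  unfolding ymono_def by (simp add: sum.union_disjoint[OF assms] mult_single)

lemma finite_tiling: "finite R \<Longrightarrow> T \<in> tilings R \<Longrightarrow> finite T"
  unfolding tilings_def dominoes_def by (rule finite_subset[of _ "Pow R"]) auto

lemma flip_move_in_flip_ideal:
  assumes R: "finite R" and move: "flip_move R T T2"
  shows "(ymono T - ymono T2 :: 'k::comm_ring_1 ypoly) \<in> flip_ideal R"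
proof -
  obtain D1 D2 where D: "(D1, D2) \<in> local_flips R" "D1 \<subseteq> T" "D2 \<inter> T = {}" "T2 = T - D1 \<union> D2"
    using move unfolding flip_move_def by blast
  have "T \<in> tilings R"
    using move unfolding flip_move_def by blast
  then have fin: "finite (T - D1)" "finite D1" "finite D2"
    using finite_tiling[OF R] local_flip_dominoes(4)[OF D(1)]
      local_flip_dominoes(4)[OF local_flip_swap[OF D(1)]] by simp_all
  have "(ymono (T - D1 \<union> D1) :: 'k ypoly) = ymono (T - D1) * ymono D1"
    using fin(1,2) by (rule ymono_union) blast
  moreover have "T - D1 \<union> D1 = T"
    using D(2) by blast
  ultimately have "(ymono T :: 'k ypoly) = ymono (T - D1) * ymono D1"
    by simp
  moreover have "(ymono T2 :: 'k ypoly) = ymono (T - D1) * ymono D2"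
    unfolding D(4) using fin(1,3) by (rule ymono_union) (use D(3) in blast)
  ultimately have "(ymono T - ymono T2 :: 'k ypoly) = ymono (T - D1) * (ymono D1 - ymono D2)"
    by (simp add: right_diff_distrib)
  moreover have "(ymono D1 - ymono D2 :: 'k ypoly) \<in> flip_ideal R"
    unfolding flip_ideal_def using D(1) by (intro gen_ideal_base) blast
  ultimately show ?thesis
    unfolding flip_ideal_def by (simp add: gen_ideal_mult)
qed

lemma flips_in_flip_ideal:
  assumes R: "finite R" and flips: "(flip_move R)\<^sup>*\<^sup>* T T'"
  shows "(ymono T - ymono T' :: 'k::comm_ring_1 ypoly) \<in> flip_ideal R"
  using flips
proof (induction rule: rtranclp_induct)
  case base
  then show ?case
    by (simp add: flip_ideal_def gen_ideal_0)
next
  case (step T2 T3)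
  have "(ymono T - ymono T2) + (ymono T2 - ymono T3) \<in> (flip_ideal R :: 'k ypoly set)"
    using step.IH flip_move_in_flip_ideal[OF R step.hyps(2)] unfolding flip_ideal_def
    by (rule gen_ideal_add)
  then show ?case
    by simp
qed

section \<open>Regions without holes\<close>

lemma mem_unit_square:
  "p \<in> unit_square c \<longleftrightarrow>
     of_int (fst c) \<le> fst p \<and> fst p \<le> of_int (fst c) + 1 \<and> of_int (snd c) \<le> snd p \<and> snd p \<le> of_int (snd c) + 1"
  by (cases p) (auto simp: unit_square_def cbox_Pair_eq)

lemma compact_region_space: "finite R \<Longrightarrow> compact (region_space R)"
  unfolding region_space_def unit_square_def by (intro compact_UN) auto

lemma ANR_region_space: "finite R \<Longrightarrow> ANR (region_space R)"
  unfolding region_space_def by (rule ANR_finite_Union_convex_closed) (auto simp: unit_square_def)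

lemma homotopic_loops_in_component:
  assumes loops: "homotopic_loops S p q" and C: "C \<in> components S" and start: "pathstart p \<in> C"
  shows "homotopic_loops C p q"
proof -
  obtain h where h: "continuous_on ({0..1::real} \<times> {0..1}) h" "h \<in> ({0..1} \<times> {0..1}) \<rightarrow> S"
    "\<forall>x\<in>{0..1}. h (0, x) = p x" "\<forall>x\<in>{0..1}. h (1, x) = q x"
    "\<forall>t\<in>{0..1}. pathfinish (h \<circ> Pair t) = pathstart (h \<circ> Pair t)"
    using loops unfolding homotopic_loops by blast
  let ?K = "h ` ({0..1} \<times> {0..1})"
  have "connected ({0..1::real} \<times> {0..1::real})"
    by (intro convex_connected convex_Times) auto
  then have "connected ?K"
    using h(1) by (rule connected_continuous_image[rotated])
  moreover have "?K \<subseteq> S"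
    using h(2) by auto
  moreover have "h (0, 0) \<in> C"
    using h(3) start unfolding pathstart_def by simp
  moreover have "h (0, 0) \<in> ?K"
    by (rule imageI) auto
  ultimately have "?K \<subseteq> C"
    using components_maximal[OF C] by blast
  then have "h \<in> ({0..1} \<times> {0..1}) \<rightarrow> C"
    by auto
  then show ?thesis
    unfolding homotopic_loops using h by blast
qed

lemma Borsukian_compact_componentwise:
  fixes S :: "'a::euclidean_space set"
  assumes "compact S" and "\<And>C. C \<in> components S \<Longrightarrow> Borsukian C"
  shows "Borsukian S"
proof -
  have punctured: "ANR (- {0::complex})"
    by (simp add: ANR_delete open_Compl open_imp_ANR)
  show ?thesis
    using cohomotopically_trivial_on_components[OF _ punctured, of S] assms
    by (auto simp: Borsukian_alt)
qed

text \<open>Without connectedness, no_holes only says that every component is simply connected.\<close>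

lemma Borsukian_if_no_holes:
  assumes "compact S" and lpc: "locally path_connected S" and holes: "no_holes S"
  shows "Borsukian S"
proof (rule Borsukian_compact_componentwise[OF \<open>compact S\<close>])
  fix C
  assume C: "C \<in> components S"
  obtain x where "C = connected_component_set S x"
    using C unfolding components_iff by blast
  then have "path_connected C"
    using path_component_eq_connected_component_set[OF lpc, of x] path_connected_path_component
    by metis
  moreover have "\<exists>a. a \<in> C \<and> homotopic_loops C p (linepath a a)"
    if p: "path p" "path_image p \<subseteq> C" "pathfinish p = pathstart p" for p
  proof -
    have "C \<subseteq> S"
      using C in_components_subset by blast
    then have "homotopic_loops S p (linepath (pathstart p) (pathstart p))"
      using holes p unfolding no_holes_def by blast
    moreover have "pathstart p \<in> C"
      using p pathstart_in_path_image by blast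
    ultimately show ?thesis
      using homotopic_loops_in_component[OF _ C] by blast
  qed
  ultimately have "simply_connected C"
    unfolding simply_connected_eq_contractible_loop_some by blast
  then show "Borsukian C"
    using locally_path_connected_components[OF lpc C] simply_connected_imp_Borsukian by blast
qed

text \<open>Borsuk's separation theorem, transported from the complex plane.\<close>

lemma connected_Compl_if_Borsukian:
  fixes S :: "(real \<times> real) set"
  assumes "compact S" and "Borsukian S"
  shows "connected (- S)"
proof -
  define f where "f z = Complex (fst z) (snd z)" for z :: "real \<times> real"
  have "linear f"
    unfolding f_def by (rule linearI) (auto simp: complex_eq_iff)
  have "bij f"
    unfolding bij_def inj_def surj_def f_def
    by (auto simp: prod_eq_iff complex_eq_iff intro: exI[of _ "(Re _, Im _)"])
  have "Borsukian (f ` S)"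
    using Borsukian_injective_linear_image[OF \<open>linear f\<close> bij_is_inj[OF \<open>bij f\<close>]] assms(2) by blast
  moreover have "compact (f ` S)"
    using assms(1) \<open>linear f\<close>
    by (intro compact_continuous_image linear_continuous_on) (simp_all add: linear_conv_bounded_linear)
  ultimately have "connected (f ` (- S))"
    using Borsukian_separation_compact bij_image_Compl_eq[OF \<open>bij f\<close>] by simp
  then have "connected ((\<lambda>z. (Re z, Im z)) ` f ` (- S))"
    by (rule connected_continuous_image[rotated]) (intro continuous_intros)
  then show ?thesis
    unfolding image_image by (simp add: f_def)
qed

lemma no_holes_imp_connected_Compl:
  assumes "finite R" and "no_holes (region_space R)"
  shows "connected (- region_space R)"
proof (rule connected_Compl_if_Borsukian)
  show "compact (region_space R)"
    using assms(1) by (rule compact_region_space)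
  moreover have "locally path_connected (region_space R)"
    using ANR_region_space[OF assms(1)] by (rule ANR_imp_locally_path_connected)
  ultimately show "Borsukian (region_space R)"
    using assms(2) by (rule Borsukian_if_no_holes)
qed

definition beyond_box :: "int \<Rightarrow> int \<Rightarrow> (real \<times> real) set" where
  "beyond_box a b = {p. fst p \<le> of_int a \<or> of_int b \<le> fst p \<or> snd p \<le> of_int a \<or> of_int b \<le> snd p}"

lemma closed_beyond_box: "closed (beyond_box a b)"
  unfolding beyond_box_def by (intro closed_Collect_disj closed_Collect_le continuous_intros)

lemma unit_squares_cover:
  assumes "p \<notin> beyond_box a b"
  obtains k where "k \<in> {a..<b} \<times> {a..<b}" and "p \<in> unit_square k"
proof
  show "(\<lfloor>fst p\<rfloor>, \<lfloor>snd p\<rfloor>) \<in> {a..<b} \<times> {a..<b}"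
    using assms unfolding beyond_box_def by (auto simp: le_floor_iff floor_less_iff)
  show "p \<in> unit_square (\<lfloor>fst p\<rfloor>, \<lfloor>snd p\<rfloor>)"
    by (simp add: mem_unit_square floor_correct less_imp_le)
qed

lemma unit_square_not_beyond:
  assumes "k \<in> {a..<b} \<times> {a..<b}" and "p \<in> unit_square k"
  shows "p \<notin> beyond_box (a - 1) (b + 1)"
proof -
  obtain i j where k: "k = (i, j)"
    by (cases k)
  with assms(1) have "a \<le> i" "i + 1 \<le> b" "a \<le> j" "j + 1 \<le> b"
    by auto
  then have "real_of_int a \<le> of_int i" "real_of_int (i + 1) \<le> of_int b"
    "real_of_int a \<le> of_int j" "real_of_int (j + 1) \<le> of_int b"
    by (simp_all only: of_int_le_iff)
  with assms(2) show ?thesis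
    unfolding k mem_unit_square beyond_box_def by auto
qed

definition cell_centre :: "cell \<Rightarrow> real \<times> real" where
  "cell_centre c = (of_int (fst c) + 1/2, of_int (snd c) + 1/2)"

lemma cell_centre_in_unit_square_iff: "cell_centre c \<in> unit_square r \<longleftrightarrow> r = c"
proof -
  have "k = m" if "(of_int k :: real) \<le> of_int m + 1/2" and "of_int m + 1/2 \<le> (of_int k :: real) + 1"
    for k m :: int
  proof -
    have "(of_int k :: real) < of_int (m + 1)" "(of_int m :: real) < of_int (k + 1)"
      using that by auto
    then have "k < m + 1" "m < k + 1"
      by (simp_all only: of_int_less_iff)
    then show ?thesis
      by simp
  qed
  then show ?thesis
    unfolding cell_centre_def mem_unit_square by (auto simp: prod_eq_iff)
qed

lemma unit_squares_meet:
  assumes x: "x \<in> unit_square k" "x \<in> unit_square k'"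
  shows "x \<in> unit_square (fst k', snd k)"
    and "(fst k', snd k) = k \<or> adjacent k (fst k', snd k)"
    and "k' = (fst k', snd k) \<or> adjacent (fst k', snd k) k'"
proof -
  have "real_of_int (fst k) \<le> real_of_int (fst k' + 1)" "real_of_int (fst k') \<le> real_of_int (fst k + 1)"
    "real_of_int (snd k) \<le> real_of_int (snd k' + 1)" "real_of_int (snd k') \<le> real_of_int (snd k + 1)"
    using x by (auto simp: mem_unit_square)
  then have "fst k \<le> fst k' + 1" "fst k' \<le> fst k + 1" "snd k \<le> snd k' + 1" "snd k' \<le> snd k + 1"
    by (simp_all only: of_int_le_iff)
  then show "(fst k', snd k) = k \<or> adjacent k (fst k', snd k)"
    and "k' = (fst k', snd k) \<or> adjacent (fst k', snd k) k'"
    by (auto simp: adjacent_def prod_eq_iff)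
  show "x \<in> unit_square (fst k', snd k)"
    using x by (simp add: mem_unit_square)
qed

text \<open>Two squares sharing a point outside the region are linked through a cell outside the region
  whose square contains that point.\<close>

lemma unit_squares_meet_outside:
  assumes closed: "\<forall>k\<in>K. \<forall>m. m \<notin> R \<and> (m = k \<or> adjacent k m) \<longrightarrow> m \<in> K"
    and k: "k \<in> K" and p: "p \<in> unit_square k" "p \<in> unit_square k'" "p \<notin> region_space R"
  shows "k' \<in> K"
proof -
  have outside: "r \<notin> R" if "p \<in> unit_square r" for r
    using that p(3) unfolding region_space_def by blast
  have "(fst k', snd k) \<in> K"
    using closed k outside unit_squares_meet[OF p(1,2)] by blast
  then show ?thesis
    using closed outside unit_squares_meet(3)[OF p(1,2)] p(2) by blast
qed

text \<open>The squares of K form a nonempty closed part of the complement of R, and so does the rest of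
  the complement together with everything far away.\<close>

lemma trapped_cells_disconnect:
  assumes box: "R \<subseteq> {a..<b} \<times> {a..<b}" and K_box: "K \<subseteq> {a..<b} \<times> {a..<b}"
    and "c \<in> K" and "K \<inter> R = {}"
    and closed: "\<forall>k\<in>K. \<forall>m. m \<notin> R \<and> (m = k \<or> adjacent k m) \<longrightarrow> m \<in> K"
  shows "\<not> connected (- region_space R)"
proof
  assume conn: "connected (- region_space R)"
  define S where "S = region_space R"
  define A where "A = (\<Union>k\<in>K. unit_square k)"
  define B where "B = (\<Union>k\<in>{a - 1..<b + 1} \<times> {a - 1..<b + 1} - K. unit_square k) \<union> beyond_box (a - 1) (b + 1)"
  have "finite K"
    using K_box by (rule finite_subset) simp
  then have "closed A"
    unfolding A_def unit_square_def by (intro closed_UN) auto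
  have "closed B"
    unfolding B_def unit_square_def by (intro closed_Un closed_UN closed_beyond_box) auto
  have "- S \<subseteq> A \<union> B"
  proof
    fix p
    show "p \<in> A \<union> B"
    proof (cases "p \<in> beyond_box (a - 1) (b + 1)")
      case False
      then obtain k where "k \<in> {a - 1..<b + 1} \<times> {a - 1..<b + 1}" "p \<in> unit_square k"
        by (rule unit_squares_cover)
      then show ?thesis
        unfolding A_def B_def by blast
    qed (simp add: B_def)
  qed
  moreover have "A \<inter> B \<inter> - S = {}"
  proof -
    have False if p: "p \<in> unit_square k" "k \<in> K" "p \<in> B" "p \<notin> S" for p k
    proof -
      have "p \<notin> beyond_box (a - 1) (b + 1)"
        using unit_square_not_beyond[OF subsetD[OF K_box p(2)] p(1)] .
      then obtain k' where k': "p \<in> unit_square k'" "k' \<notin> K"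
        using p(3) unfolding B_def by blast
      have "p \<notin> region_space R"
        using p(4) unfolding S_def .
      with k' show False
        using unit_squares_meet_outside[OF closed p(2,1) k'(1)] by blast
    qed
    then show ?thesis
      unfolding A_def by blast
  qed
  moreover have "cell_centre c \<in> A \<inter> - S"
    using \<open>c \<in> K\<close> \<open>K \<inter> R = {}\<close> unfolding A_def S_def region_space_def
    by (auto simp: cell_centre_in_unit_square_iff)
  moreover have "(of_int b + 1, of_int b + 1) \<in> B \<inter> - S"
  proof -
    have "(of_int b + 1, of_int b + 1) \<in> beyond_box (a - 1) (b + 1)"
      unfolding beyond_box_def by simp
    then show ?thesis
      using unit_square_not_beyond box unfolding B_def S_def region_space_def by blast
  qed
  moreover from conn have "\<not> (\<exists>A B. closed A \<and> closed B \<and> - S \<subseteq> A \<union> B \<and> A \<inter> B \<inter> - S = {} \<and>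
      A \<inter> - S \<noteq> {} \<and> B \<inter> - S \<noteq> {})"
    unfolding connected_closed S_def .
  ultimately show False
    using \<open>closed A\<close> \<open>closed B\<close> by blast
qed

lemma escapes_if_connected_Compl:
  assumes conn: "connected (- region_space R)" and box: "R \<subseteq> {a..<b} \<times> {a..<b}" and c: "c \<notin> R"
  shows "escapes R a b c"
proof (rule ccontr)
  assume "\<not> escapes R a b c"
  define K where "K = {k. k \<notin> R \<and> \<not> escapes R a b k}"
  have "K \<subseteq> {a..<b} \<times> {a..<b}"
    using escapes.outside unfolding K_def by blast
  moreover have "c \<in> K" and "K \<inter> R = {}"
    using c \<open>\<not> escapes R a b c\<close> unfolding K_def by blast+
  moreover have "\<forall>k\<in>K. \<forall>m. m \<notin> R \<and> (m = k \<or> adjacent k m) \<longrightarrow> m \<in> K"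
    using escapes.step unfolding K_def by blast
  ultimately show False
    using trapped_cells_disconnect[OF box] conn by blast
qed

lemma finite_region_in_box:
  assumes "finite R"
  obtains a b :: int where "a < b" and "R \<subseteq> {a..<b} \<times> {a..<b}"
proof -
  define N where "N = Max (insert 0 ((\<lambda>c. \<bar>fst c\<bar> + \<bar>snd c\<bar>) ` R))"
  have "\<bar>fst c\<bar> + \<bar>snd c\<bar> \<le> N" if "c \<in> R" for c
    unfolding N_def using assms that by (intro Max_ge) auto
  moreover have "0 \<le> N"
    unfolding N_def using assms by (intro Max_ge) auto
  ultimately have "- N < N + 1" "R \<subseteq> {- N..<N + 1} \<times> {- N..<N + 1}"
    by force+
  then show thesis
    by (rule that)
qed

theorem mainTheorem8:
  fixes R :: "cell set"
  assumes "finite R"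
    and "no_holes (region_space R)"
  shows "(\<forall>T1 T2. T1 \<in> tilings R \<and> T2 \<in> tilings R \<and> T1 \<noteq> T2 \<longrightarrow>
            (ymono T1 - ymono T2 :: 'k::field ypoly) \<in> flip_ideal R)
         \<and> (tiling_ideal R :: 'k::field ypoly set) \<subseteq> flip_ideal R"
proof -
  obtain a b where "a < b" and box: "R \<subseteq> {a..<b} \<times> {a..<b}"
    using finite_region_in_box[OF assms(1)] by blast
  have "connected (- region_space R)"
    using assms by (rule no_holes_imp_connected_Compl)
  then interpret boxed_region R a b
    using box \<open>a < b\<close> escapes_if_connected_Compl by unfold_locales blast+
  have binomial: "(ymono T1 - ymono T2 :: 'k ypoly) \<in> flip_ideal R"
    if "T1 \<in> tilings R" and "T2 \<in> tilings R" for T1 T2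
    using flips_in_flip_ideal[OF assms(1) flip_connected[OF that]] .
  then have "(tiling_ideal R :: 'k ypoly set) \<subseteq> flip_ideal R"
    unfolding tiling_ideal_def flip_ideal_def
    by (intro gen_ideal_subset_gen_ideal) (auto simp: flip_ideal_def)
  with binomial show ?thesis
    by blast
qed

end
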